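(* Let $D=0.5$, let $p_0,p_1,p_2,\dots$ be the PWM basis functions defined in the context, and let $$g(\tau)=\begin{cases}1, & 0\le\tau<0.25,\\ 0, & 0.25\le\tau<0.75,\\ -1, & 0.75\le\tau\le1.\end{cases}$$ Then (i) $\int_0^1 p_k(\tau)\,g(\tau)\,d\tau=0$ for $k=0$ and for every odd $k\ge1$; and (ii) there is a constant $c>0$ such that for every $N_p\in\mathbb N$, the $L^2([0,1])$-orthogonal projection $g_h$ of $g$ onto $\mathrm{span}\{p_0,\dots,p_{N_p}\}$ satisfies $\|g-g_h\|_{L^2([0,1])}\ge c$. In particular, the PWM basis functions with $D=0.5$ do not span a dense subspace of $L^2([0,1])$.
   Context: The PWM basis functions with duty cycle $D\in(0,1)$ are functions of the relative time $\tau\in[0,1]$, defined recursively as follows. Set $p_0(\tau)=1$ on $[0,1]$, and $$p_1(\tau)=\begin{cases}\sqrt3\,\dfrac{2\tau-D}{D}, & 0\le\tau\le D,\\[2mm] \sqrt3\,\dfrac{1+D-2\tau}{1-D}, & D\le\tau\le 1.\end{cases}$$ For $k\ge2$, define $p_k^\star(\tau)=\int_D^\tau p_{k-1}(\tau')\,d\tau'$, then $$\overline p_k(\tau)=p_k^\star(\tau)-\sum_{l=0}^{k-1}p_l(\tau)\int_0^1 p_l(s)\,p_k^\star(s)\,ds,\qquad p_k(\tau)=\frac{\overline p_k(\tau)}{\left(\int_0^1\overline p_k(s)^2\,ds\right)^{1/2}}.$$ *)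

theory Defs
  imports "HOL-Analysis.Analysis"
begin

definition oint :: "real \<Rightarrow> real \<Rightarrow> (real \<Rightarrow> real) \<Rightarrow> real" where
  "oint a t f = (if a \<le> t then integral {a..t} f else - integral {t..a} f)"

definition ip01 :: "(real \<Rightarrow> real) \<Rightarrow> (real \<Rightarrow> real) \<Rightarrow> real" where
  "ip01 f g = integral {0..1} (\<lambda>s. f s * g s)"

definition pwm_p0 :: "real \<Rightarrow> real" where
  "pwm_p0 t = 1"

definition pwm_p1 :: "real \<Rightarrow> real \<Rightarrow> real" where
  "pwm_p1 D t = (if t \<le> D then sqrt 3 * (2 * t - D) / D
                 else sqrt 3 * (1 + D - 2 * t) / (1 - D))"

definition pwm_next :: "real \<Rightarrow> (real \<Rightarrow> real) list \<Rightarrow> (real \<Rightarrow> real)" where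
  "pwm_next D ps =
    (let pstar = (\<lambda>t. oint D t (last ps));
         pbar = (\<lambda>t. pstar t - (\<Sum>l<length ps. (ps ! l) t * ip01 (ps ! l) pstar))
     in (\<lambda>t. pbar t / sqrt (ip01 pbar pbar)))"

fun pwm_list :: "real \<Rightarrow> nat \<Rightarrow> (real \<Rightarrow> real) list" where
  "pwm_list D 0 = [pwm_p0]"
| "pwm_list D (Suc 0) = [pwm_p0, pwm_p1 D]"
| "pwm_list D (Suc (Suc n)) =
     (let ps = pwm_list D (Suc n) in ps @ [pwm_next D ps])"

definition pwm :: "real \<Rightarrow> nat \<Rightarrow> real \<Rightarrow> real" where
  "pwm D k = pwm_list D k ! k"

definition g_test :: "real \<Rightarrow> real" where
  "g_test t = (if t < 1/4 then 1 else if t < 3/4 then 0 else -1)"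

definition L2norm01 :: "(real \<Rightarrow> real) \<Rightarrow> real" where
  "L2norm01 f = sqrt (integral {0..1} (\<lambda>t. (f t)\<^sup>2))"

end

theory Submission
  imports Defs
begin

(* For D = 1/2 each p_k lies in one of two reflection classes: p_0 and the p_k of odd index are
   symmetric about 1/2 and point-symmetric about (1/4, p_k(1/4)); the p_k of even index k >= 2 are
   antisymmetric about 1/2 and symmetric about 1/4.  Integration from 1/2 maps each class of
   mean-zero functions into the other, and the two classes are orthogonal, so the Gram-Schmidt
   corrections against the other class vanish and the class is preserved by induction.
   Both classes are orthogonal to the Rademacher function r_2 (+1, -1, +1, -1 on the quarters of
   [0,1]), the first also to g.  As <g, r_2> = 1/2 and r_2^2 = 1, Cauchy-Schwarz gives
   ||g - s|| >= 1/2 for every s in the span, and likewise ||r_2 - s|| >= 1, so the span is not dense. *)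

lemma integral_reflect_shift_real:
  fixes f :: "real \<Rightarrow> real"
  shows "integral {c - b..c - a} f = integral {a..b} (\<lambda>s. f (c - s))"
proof -
  have "integral {a..b} (\<lambda>s. f (c - s)) = integral {-b..-a} (\<lambda>x. f (c - - x))"
    using Henstock_Kurzweil_Integration.integral_reflect_real[of b a "\<lambda>s. f (c - s)"] by simp
  also have "\<dots> = integral {(c - b) - c..(c - a) - c} (\<lambda>x. f (x + c))"
    by (simp add: add.commute)
  also have "\<dots> = integral {c - b..c - a} f"
    by (rule integral_shift_real_ivl)
  finally show ?thesis by simp
qed

lemma integral_reflected_interval:
  fixes f :: "real \<Rightarrow> real"
  assumes "f integrable_on {a..b}" "a \<le> b"
    and "\<And>s. s \<in> {a..b} \<Longrightarrow> f (c - s) = \<sigma> * f s + \<kappa>"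
  shows "integral {c - b..c - a} f = \<sigma> * integral {a..b} f + \<kappa> * (b - a)"
proof -
  have "integral {c - b..c - a} f = integral {a..b} (\<lambda>s. \<sigma> * f s + \<kappa>)"
    unfolding integral_reflect_shift_real using assms(3) by (intro integral_cong) auto
  also have "\<dots> = \<sigma> * integral {a..b} f + \<kappa> * (b - a)"
    by (subst integral_add) (use assms(1,2) integrable_cmul[of f "{a..b}" \<sigma>] in auto)
  finally show ?thesis .
qed

lemma integral_01_eq_0_if_antisymmetric:
  fixes f :: "real \<Rightarrow> real"
  assumes "\<And>s. s \<in> {0..1} \<Longrightarrow> f (1 - s) = - f s"
  shows "integral {0..1} f = 0"
proof -
  have "integral {1 - 1..1 - 0} f = integral {0..1} (\<lambda>s. - f s)"
    unfolding integral_reflect_shift_real using assms by (intro integral_cong) auto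
  then show ?thesis by (simp add: integral_neg)
qed

lemma integrable_on_subinterval_01:
  fixes f :: "real \<Rightarrow> real"
  assumes "continuous_on {0..1} f" "0 \<le> a" "b \<le> 1"
  shows "f integrable_on {a..b}"
  using assms by (intro integrable_continuous_real) (auto intro: continuous_on_subset)

lemma integral_upto_reflected:
  fixes f :: "real \<Rightarrow> real"
  assumes "continuous_on {0..1} f" "0 \<le> t" "t \<le> c" "c \<le> 1"
    and "\<And>s. s \<in> {0..t} \<Longrightarrow> f (c - s) = \<sigma> * f s + \<kappa>"
  shows "integral {0..c - t} f = integral {0..c} f - \<sigma> * integral {0..t} f - \<kappa> * t"
proof -
  have "integral {c - t..c - 0} f = \<sigma> * integral {0..t} f + \<kappa> * (t - 0)"
    using assms by (intro integral_reflected_interval) (auto intro: integrable_on_subinterval_01)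
  moreover have "integral {0..c - t} f + integral {c - t..c} f = integral {0..c} f"
    using assms by (intro Henstock_Kurzweil_Integration.integral_combine) (auto intro: integrable_on_subinterval_01)
  ultimately show ?thesis by simp
qed

lemma oint_half_eq:
  fixes f :: "real \<Rightarrow> real"
  assumes "continuous_on {0..1} f" "t \<in> {0..1}"
  shows "oint (1/2) t f = integral {0..t} f - integral {0..1/2} f"
proof (cases "1/2 \<le> t")
  case True
  have "integral {0..1/2} f + integral {1/2..t} f = integral {0..t} f"
    using True assms by (intro Henstock_Kurzweil_Integration.integral_combine) (auto intro: integrable_on_subinterval_01)
  then show ?thesis using True by (simp add: oint_def)
next
  case False
  have "integral {0..t} f + integral {t..1/2} f = integral {0..1/2} f"
    using False assms by (intro Henstock_Kurzweil_Integration.integral_combine) (auto intro: integrable_on_subinterval_01)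
  then show ?thesis using False by (simp add: oint_def)
qed

lemma continuous_on_oint_half:
  fixes f :: "real \<Rightarrow> real"
  assumes "continuous_on {0..1} f"
  shows "continuous_on {0..1} (\<lambda>t. oint (1/2) t f)"
proof -
  have "continuous_on {0..1} (\<lambda>t. integral {0..t} f - integral {0..1/2} f)"
    using assms
    by (intro continuous_intros indefinite_integral_continuous_1 integrable_on_subinterval_01) auto
  then show ?thesis
    by (rule continuous_on_eq) (use oint_half_eq[OF assms] in auto)
qed

definition reflection_class :: "real \<Rightarrow> (real \<Rightarrow> real) \<Rightarrow> bool" where
  "reflection_class \<sigma> f \<longleftrightarrow> continuous_on {0..1} f
     \<and> (\<forall>t\<in>{0..1}. f (1 - t) = \<sigma> * f t)
     \<and> (\<forall>t\<in>{0..1/2}. f (1/2 - t) - f (1/4) = - \<sigma> * (f t - f (1/4)))"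

lemma reflection_class_zero: "reflection_class \<sigma> (\<lambda>t. 0)"
  by (simp add: reflection_class_def)

lemma reflection_class_lincomb:
  assumes "reflection_class \<sigma> f" "reflection_class \<sigma> g"
  shows "reflection_class \<sigma> (\<lambda>t. a * f t + b * g t)"
  unfolding reflection_class_def
proof (intro conjI ballI)
  have "continuous_on {0..1} f" "continuous_on {0..1} g"
    using assms by (auto simp: reflection_class_def)
  then show "continuous_on {0..1} (\<lambda>t. a * f t + b * g t)"
    by (intro continuous_intros)
next
  fix t :: real assume "t \<in> {0..1}"
  then have "f (1 - t) = \<sigma> * f t" "g (1 - t) = \<sigma> * g t"
    using assms by (auto simp: reflection_class_def)
  then show "a * f (1 - t) + b * g (1 - t) = \<sigma> * (a * f t + b * g t)"
    by algebra
next
  fix t :: real assume "t \<in> {0..1/2}"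
  then have "f (1/2 - t) - f (1/4) = - \<sigma> * (f t - f (1/4))"
    "g (1/2 - t) - g (1/4) = - \<sigma> * (g t - g (1/4))"
    using assms by (auto simp: reflection_class_def)
  then show "a * f (1/2 - t) + b * g (1/2 - t) - (a * f (1/4) + b * g (1/4))
      = - \<sigma> * (a * f t + b * g t - (a * f (1/4) + b * g (1/4)))"
    by algebra
qed

lemma reflection_class_add:
  "reflection_class \<sigma> f \<Longrightarrow> reflection_class \<sigma> g \<Longrightarrow> reflection_class \<sigma> (\<lambda>t. f t + g t)"
  using reflection_class_lincomb[of \<sigma> f g 1 1] by simp

lemma reflection_class_diff:
  "reflection_class \<sigma> f \<Longrightarrow> reflection_class \<sigma> g \<Longrightarrow> reflection_class \<sigma> (\<lambda>t. f t - g t)"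
  using reflection_class_lincomb[of \<sigma> f g 1 "-1"] by simp

lemma reflection_class_mult_const:
  "reflection_class \<sigma> f \<Longrightarrow> reflection_class \<sigma> (\<lambda>t. f t * c)"
  using reflection_class_lincomb[of \<sigma> f f c 0] by (simp add: mult.commute)

lemma reflection_class_divide_const:
  "reflection_class \<sigma> f \<Longrightarrow> reflection_class \<sigma> (\<lambda>t. f t / c)"
  unfolding divide_inverse by (rule reflection_class_mult_const)

lemma reflection_class_sum:
  "finite A \<Longrightarrow> (\<And>l. l \<in> A \<Longrightarrow> reflection_class \<sigma> (f l))
    \<Longrightarrow> reflection_class \<sigma> (\<lambda>t. \<Sum>l\<in>A. f l t)"
  by (induction A rule: finite_induct) (auto intro: reflection_class_add reflection_class_zero)

lemma integral_reflection_class: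
  assumes "reflection_class \<sigma> f"
  shows "integral {0..1} f = (1 + \<sigma>) * f (1/4) / 2"
proof -
  have c: "continuous_on {0..1} f" and mirror: "\<forall>t\<in>{0..1}. f (1 - t) = \<sigma> * f t"
    and quarter: "\<forall>t\<in>{0..1/2}. f (1/2 - t) - f (1/4) = - \<sigma> * (f t - f (1/4))"
    using assms by (auto simp: reflection_class_def)
  have "integral {1 - 1/2..1 - 0} f = \<sigma> * integral {0..1/2} f + 0 * (1/2 - 0)"
    using c mirror by (intro integral_reflected_interval) (auto intro: integrable_on_subinterval_01)
  moreover have "integral {1/2 - 1/2..1/2 - 0} f
      = - \<sigma> * integral {0..1/2} f + (1 + \<sigma>) * f (1/4) * (1/2 - 0)"
    using c quarter by (intro integral_reflected_interval)
      (auto intro: integrable_on_subinterval_01 simp: algebra_simps)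
  moreover have "integral {0..1/2} f + integral {1/2..1} f = integral {0..1} f"
    using c by (intro Henstock_Kurzweil_Integration.integral_combine)
      (auto intro: integrable_on_subinterval_01)
  ultimately show ?thesis
    by (simp add: algebra_simps)
qed

lemma integral_upto_reflection_class:
  assumes "reflection_class \<sigma> f"
  shows "t \<in> {0..1} \<Longrightarrow> integral {0..1 - t} f = integral {0..1} f - \<sigma> * integral {0..t} f"
    and "t \<in> {0..1/2} \<Longrightarrow> integral {0..1/2 - t} f
      = integral {0..1/2} f + \<sigma> * integral {0..t} f - (1 + \<sigma>) * f (1/4) * t"
proof -
  have c: "continuous_on {0..1} f" and mirror: "\<forall>t\<in>{0..1}. f (1 - t) = \<sigma> * f t"
    and quarter: "\<forall>t\<in>{0..1/2}. f (1/2 - t) - f (1/4) = - \<sigma> * (f t - f (1/4))"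
    using assms by (auto simp: reflection_class_def)
  show "integral {0..1 - t} f = integral {0..1} f - \<sigma> * integral {0..t} f" if "t \<in> {0..1}"
    using integral_upto_reflected[of f t 1 \<sigma> 0] c mirror that by auto
  show "integral {0..1/2 - t} f
      = integral {0..1/2} f + \<sigma> * integral {0..t} f - (1 + \<sigma>) * f (1/4) * t" if "t \<in> {0..1/2}"
    using integral_upto_reflected[of f t "1/2" "- \<sigma>" "(1 + \<sigma>) * f (1/4)"] c quarter that
    by (auto simp: algebra_simps)
qed

text \<open>The mean-zero hypothesis is vacuous for \<open>\<sigma> = -1\<close>; for \<open>\<sigma> = 1\<close> it forces \<open>f (1/4) = 0\<close>,
  so that the antiderivative becomes symmetric about \<open>1/4\<close>.\<close>
lemma reflection_class_oint_half:
  assumes f: "reflection_class \<sigma> f" and mean: "integral {0..1} f = 0"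
  shows "reflection_class (- \<sigma>) (\<lambda>t. oint (1/2) t f)"
proof -
  have c: "continuous_on {0..1} f"
    using f by (simp add: reflection_class_def)
  define h where "h x = integral {0..x} f" for x
  have h_mirror: "h (1 - t) = - \<sigma> * h t" if "t \<in> {0..1}" for t
    using integral_upto_reflection_class(1)[OF f that] mean by (simp add: h_def)
  have h_quarter: "h (1/2 - t) = h (1/2) + \<sigma> * h t - (1 + \<sigma>) * f (1/4) * t"
    if "t \<in> {0..1/2}" for t
    using integral_upto_reflection_class(2)[OF f that] by (simp add: h_def)
  have f_quarter: "(1 + \<sigma>) * f (1/4) = 0"
    using mean integral_reflection_class[OF f] by simp
  have h_half: "(1 + \<sigma>) * h (1/2) = 0"
    using h_mirror[of "1/2"] by (simp add: algebra_simps)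
  have oint_h: "oint (1/2) t f = h t - h (1/2)" if "t \<in> {0..1}" for t
    using oint_half_eq[OF c that] by (simp add: h_def)
  show ?thesis
    unfolding reflection_class_def
  proof (intro conjI ballI)
    show "continuous_on {0..1} (\<lambda>t. oint (1/2) t f)"
      by (rule continuous_on_oint_half[OF c])
  next
    fix t :: real assume "t \<in> {0..1}"
    then have "h (1 - t) = - \<sigma> * h t"
      "oint (1/2) t f = h t - h (1/2)" "oint (1/2) (1 - t) f = h (1 - t) - h (1/2)"
      using h_mirror oint_h by auto
    with h_half show "oint (1/2) (1 - t) f = - \<sigma> * oint (1/2) t f"
      by algebra
  next
    fix t :: real assume "t \<in> {0..1/2}"
    then have "h (1/2 - t) = h (1/2) + \<sigma> * h t - (1 + \<sigma>) * f (1/4) * t"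
      "oint (1/2) t f = h t - h (1/2)" "oint (1/2) (1/2 - t) f = h (1/2 - t) - h (1/2)"
      "oint (1/2) (1/4) f = h (1/4) - h (1/2)"
      using h_quarter[of t] oint_h by auto
    moreover have "h (1/4) = h (1/2) + \<sigma> * h (1/4) - (1 + \<sigma>) * f (1/4) * (1/4)"
      using h_quarter[of "1/4"] by simp
    ultimately show "oint (1/2) (1/2 - t) f - oint (1/2) (1/4) f
        = - (- \<sigma>) * (oint (1/2) t f - oint (1/2) (1/4) f)"
      using f_quarter by algebra
  qed
qed

lemma ip01_reflection_class_eq_0:
  assumes "reflection_class \<sigma> f" "reflection_class \<tau> g" "\<sigma> * \<tau> = -1"
  shows "ip01 f g = 0"
  unfolding ip01_def
proof (rule integral_01_eq_0_if_antisymmetric)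
  fix s :: real assume "s \<in> {0..1}"
  then have "f (1 - s) = \<sigma> * f s" "g (1 - s) = \<tau> * g s"
    using assms by (auto simp: reflection_class_def)
  with assms(3) show "f (1 - s) * g (1 - s) = - (f s * g s)"
    by algebra
qed

lemma reflection_class_quarter_integrals:
  assumes "reflection_class \<sigma> f"
  shows "integral {3/4..1} f = \<sigma> * integral {0..1/4} f"
    and "integral {1/2..3/4} f = \<sigma> * integral {1/4..1/2} f"
    and "integral {1/4..1/2} f = (1 + \<sigma>) * f (1/4) / 4 - \<sigma> * integral {0..1/4} f"
proof -
  have c: "continuous_on {0..1} f" and mirror: "\<forall>t\<in>{0..1}. f (1 - t) = \<sigma> * f t"
    and quarter: "\<forall>t\<in>{0..1/2}. f (1/2 - t) - f (1/4) = - \<sigma> * (f t - f (1/4))"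
    using assms by (auto simp: reflection_class_def)
  have "integral {1 - 1/4..1 - 0} f = \<sigma> * integral {0..1/4} f + 0 * (1/4 - 0)"
    using c mirror by (intro integral_reflected_interval) (auto intro: integrable_on_subinterval_01)
  then show "integral {3/4..1} f = \<sigma> * integral {0..1/4} f"
    by simp
  have "integral {1 - 1/2..1 - 1/4} f = \<sigma> * integral {1/4..1/2} f + 0 * (1/2 - 1/4)"
    using c mirror by (intro integral_reflected_interval) (auto intro: integrable_on_subinterval_01)
  then show "integral {1/2..3/4} f = \<sigma> * integral {1/4..1/2} f"
    by simp
  have "integral {1/2 - 1/4..1/2 - 0} f
      = - \<sigma> * integral {0..1/4} f + (1 + \<sigma>) * f (1/4) * (1/4 - 0)"
    using c quarter by (intro integral_reflected_interval)
      (auto intro: integrable_on_subinterval_01 simp: algebra_simps)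
  then show "integral {1/4..1/2} f = (1 + \<sigma>) * f (1/4) / 4 - \<sigma> * integral {0..1/4} f"
    by simp
qed

text \<open>The paper's \<open>p\<^sub>k\<close>-bar, with \<open>F = p\<^sub>k\<^sup>\<star>\<close> and \<open>P l = p\<^sub>l\<close> for \<open>l < m = k\<close>.\<close>
definition gs_residual :: "(nat \<Rightarrow> real \<Rightarrow> real) \<Rightarrow> nat \<Rightarrow> (real \<Rightarrow> real) \<Rightarrow> real \<Rightarrow> real" where
  "gs_residual P m F = (\<lambda>t. F t - (\<Sum>l<m. P l t * ip01 (P l) F))"

lemma reflection_class_gs_residual:
  assumes F: "reflection_class \<sigma> F" and \<sigma>: "\<sigma>\<^sup>2 = 1"
    and P: "\<And>l. l < m \<Longrightarrow> reflection_class \<sigma> (P l) \<or> reflection_class (- \<sigma>) (P l)"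
  shows "reflection_class \<sigma> (gs_residual P m F)"
proof -
  have "reflection_class \<sigma> (\<lambda>t. P l t * ip01 (P l) F)" if "l < m" for l
    using P[OF that]
  proof
    assume "reflection_class \<sigma> (P l)"
    then show ?thesis by (rule reflection_class_mult_const)
  next
    assume "reflection_class (- \<sigma>) (P l)"
    then have "ip01 (P l) F = 0"
      using F \<sigma> by (intro ip01_reflection_class_eq_0) (auto simp: power2_eq_square)
    then show ?thesis by (simp add: reflection_class_zero)
  qed
  then show ?thesis
    unfolding gs_residual_def using F by (intro reflection_class_diff reflection_class_sum) auto
qed

lemma integral_gs_residual_eq_0:
  assumes F: "continuous_on {0..1} F" and P: "\<And>l. l < m \<Longrightarrow> continuous_on {0..1} (P l)"
    and "0 < m" "P 0 = (\<lambda>t. 1)" "\<And>l. 0 < l \<Longrightarrow> l < m \<Longrightarrow> integral {0..1} (P l) = 0"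
  shows "integral {0..1} (gs_residual P m F) = 0"
proof -
  have int: "(\<lambda>t. P l t * ip01 (P l) F) integrable_on {0..1}" if "l < m" for l
    using P[OF that] by (intro integrable_continuous_real continuous_intros)
  have "integral {0..1} (gs_residual P m F)
      = integral {0..1} F - (\<Sum>l<m. integral {0..1} (P l) * ip01 (P l) F)"
  proof -
    have "integral {0..1} (\<lambda>t. \<Sum>l<m. P l t * ip01 (P l) F)
        = (\<Sum>l<m. integral {0..1} (\<lambda>t. P l t * ip01 (P l) F))"
      using int by (intro integral_sum) auto
    then show ?thesis
      unfolding gs_residual_def using F int
      by (subst integral_diff) (auto simp: integrable_continuous_real intro!: integrable_sum)
  qed
  also have "(\<Sum>l<m. integral {0..1} (P l) * ip01 (P l) F)
      = (\<Sum>l<m. if l = 0 then integral {0..1} F else 0)"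
    using assms(4,5) by (intro sum.cong) (auto simp: ip01_def)
  also have "\<dots> = integral {0..1} F"
    using assms(3) by simp
  finally show ?thesis by simp
qed

lemma reflection_class_normalized_gs_residual:
  assumes \<sigma>: "\<sigma>\<^sup>2 = 1" and p: "reflection_class (- \<sigma>) p" "integral {0..1} p = 0"
    and P: "\<And>l. l < m \<Longrightarrow> reflection_class \<sigma> (P l) \<or> reflection_class (- \<sigma>) (P l)"
    and P0: "0 < m" "P 0 = (\<lambda>t. 1)"
    and mean: "\<And>l. 0 < l \<Longrightarrow> l < m \<Longrightarrow> integral {0..1} (P l) = 0"
  defines "r \<equiv> gs_residual P m (\<lambda>t. oint (1/2) t p)"
  shows "reflection_class \<sigma> (\<lambda>t. r t / sqrt (ip01 r r))
    \<and> integral {0..1} (\<lambda>t. r t / sqrt (ip01 r r)) = 0"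
proof -
  have F: "reflection_class \<sigma> (\<lambda>t. oint (1/2) t p)"
    using reflection_class_oint_half[OF p] by simp
  have "reflection_class \<sigma> r"
    unfolding r_def using F \<sigma> P by (rule reflection_class_gs_residual)
  moreover have "integral {0..1} r = 0"
    unfolding r_def using F P P0 mean
    by (intro integral_gs_residual_eq_0) (auto simp: reflection_class_def)
  ultimately show ?thesis
    by (simp add: reflection_class_divide_const)
qed

lemma length_pwm_list: "length (pwm_list D n) = Suc n"
  by (induction D n rule: pwm_list.induct) (auto simp: Let_def)

lemma pwm_list_Suc: "pwm_list D (Suc n) = pwm_list D n @ [pwm D (Suc n)]"
  by (cases n) (simp_all add: pwm_def Let_def nth_append length_pwm_list)

lemma pwm_list_eq_map: "pwm_list D n = map (pwm D) [0..<Suc n]"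
  by (induction n) (simp add: pwm_def, simp add: pwm_list_Suc del: pwm_list.simps)

lemma pwm_0: "pwm D 0 = (\<lambda>t. 1)"
  by (simp add: pwm_def pwm_p0_def fun_eq_iff)

lemma pwm_Suc_0: "pwm D (Suc 0) = pwm_p1 D"
  by (simp add: pwm_def)

lemma pwm_Suc_Suc:
  "pwm D (Suc (Suc n)) =
    (let r = gs_residual (pwm D) (Suc (Suc n)) (\<lambda>t. oint D t (pwm D (Suc n)))
     in (\<lambda>t. r t / sqrt (ip01 r r)))"
proof -
  let ?ps = "map (pwm D) [0..<Suc (Suc n)]"
  have "pwm D (Suc (Suc n)) = pwm_next D (pwm_list D (Suc n))"
    by (simp add: pwm_def Let_def nth_append length_pwm_list)
  then have "pwm D (Suc (Suc n)) = pwm_next D ?ps"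
    by (simp only: pwm_list_eq_map)
  moreover have "(\<Sum>l<length ?ps. (?ps ! l) t * ip01 (?ps ! l) G) = (\<Sum>l<Suc (Suc n). pwm D l t * ip01 (pwm D l) G)"
    for t G by (intro sum.cong) (simp_all del: upt_Suc)
  ultimately show ?thesis
    by (simp add: pwm_next_def gs_residual_def Let_def last_map del: upt_Suc)
qed

lemma reflection_class_pwm_p1_half: "reflection_class 1 (pwm_p1 (1/2))"
proof -
  have p1: "pwm_p1 (1/2) = (\<lambda>t. sqrt 3 * (1 - 4 * \<bar>t - 1/2\<bar>))"
    by (auto simp: pwm_p1_def fun_eq_iff field_simps abs_if)
  show ?thesis
    unfolding reflection_class_def p1
    by (intro conjI ballI continuous_intros) (auto simp: abs_minus_commute abs_if algebra_simps)
qed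

lemma reflection_class_pwm_half:
  "reflection_class (if k = 0 \<or> odd k then 1 else -1) (pwm (1/2) k)
    \<and> (0 < k \<longrightarrow> integral {0..1} (pwm (1/2) k) = 0)"
proof (induction k rule: less_induct)
  case (less k)
  consider "k = 0" | "k = 1" | n where "k = Suc (Suc n)"
    by (metis One_nat_def not0_implies_Suc)
  then show ?case
  proof cases
    case 1
    then show ?thesis by (simp add: pwm_0 reflection_class_def)
  next
    case 2
    have "integral {0..1} (pwm_p1 (1/2)) = 0"
      using integral_reflection_class[OF reflection_class_pwm_p1_half] by (simp add: pwm_p1_def)
    with 2 show ?thesis by (simp add: pwm_Suc_0 reflection_class_pwm_p1_half)
  next
    case (3 n)
    define \<sigma> :: real where "\<sigma> = (if odd k then 1 else -1)"
    have IH: "reflection_class (if l = 0 \<or> odd l then 1 else -1) (pwm (1/2) l)"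
      "0 < l \<Longrightarrow> integral {0..1} (pwm (1/2) l) = 0" if "l < k" for l
      using less.IH[OF that] by auto
    have "(if Suc n = 0 \<or> odd (Suc n) then 1 else -1) = - \<sigma>"
      using 3 by (simp add: \<sigma>_def)
    then have "reflection_class (- \<sigma>) (pwm (1/2) (Suc n))"
      using IH(1)[of "Suc n"] 3 by simp
    moreover have "reflection_class \<sigma> (pwm (1/2) l) \<or> reflection_class (- \<sigma>) (pwm (1/2) l)"
      if "l < k" for l
      using IH(1)[OF that] by (cases "l = 0 \<or> odd l"; cases "odd k") (simp_all add: \<sigma>_def)
    ultimately have "reflection_class \<sigma> (pwm (1/2) k) \<and> integral {0..1} (pwm (1/2) k) = 0"
      unfolding 3 pwm_Suc_Suc Let_def using IH(2) 3
      by (intro reflection_class_normalized_gs_residual) (auto simp: \<sigma>_def pwm_0)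
    then show ?thesis
      using 3 by (simp add: \<sigma>_def)
  qed
qed

lemma has_integral_quarters:
  fixes \<phi> \<psi>1 \<psi>2 \<psi>3 \<psi>4 :: "real \<Rightarrow> real"
  assumes "continuous_on {0..1} \<psi>1" "continuous_on {0..1} \<psi>2"
    and "continuous_on {0..1} \<psi>3" "continuous_on {0..1} \<psi>4"
    and "\<And>t. 0 \<le> t \<Longrightarrow> t < 1/4 \<Longrightarrow> \<phi> t = \<psi>1 t"
    and "\<And>t. 1/4 \<le> t \<Longrightarrow> t < 1/2 \<Longrightarrow> \<phi> t = \<psi>2 t"
    and "\<And>t. 1/2 \<le> t \<Longrightarrow> t < 3/4 \<Longrightarrow> \<phi> t = \<psi>3 t"
    and "\<And>t. 3/4 \<le> t \<Longrightarrow> t \<le> 1 \<Longrightarrow> \<phi> t = \<psi>4 t"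
  shows "(\<phi> has_integral (integral {0..1/4} \<psi>1 + integral {1/4..1/2} \<psi>2
            + integral {1/2..3/4} \<psi>3 + integral {3/4..1} \<psi>4)) {0..1}"
proof -
  have piece: "(\<psi> has_integral integral {a..b} \<psi>) {a..b}"
    if "continuous_on {0..1} \<psi>" "0 \<le> a" "b \<le> 1" for \<psi> :: "real \<Rightarrow> real" and a b
    using integrable_on_subinterval_01[OF that] by (simp add: has_integral_integral)
  have h1: "(\<phi> has_integral integral {0..1/4} \<psi>1) {0..1/4}"
    by (rule has_integral_spike_finite[of "{1/4}" _ _ \<psi>1]) (use assms piece in auto)
  have h2: "(\<phi> has_integral integral {1/4..1/2} \<psi>2) {1/4..1/2}"
    by (rule has_integral_spike_finite[of "{1/2}" _ _ \<psi>2]) (use assms piece in auto)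
  have h3: "(\<phi> has_integral integral {1/2..3/4} \<psi>3) {1/2..3/4}"
    by (rule has_integral_spike_finite[of "{3/4}" _ _ \<psi>3]) (use assms piece in auto)
  have h4: "(\<phi> has_integral integral {3/4..1} \<psi>4) {3/4..1}"
    by (rule has_integral_spike_finite[of "{}" _ _ \<psi>4]) (use assms piece in auto)
  have h12: "(\<phi> has_integral (integral {0..1/4} \<psi>1 + integral {1/4..1/2} \<psi>2)) {0..1/2}"
    by (rule has_integral_combine[OF _ _ h1 h2]) auto
  have h123: "(\<phi> has_integral (integral {0..1/4} \<psi>1 + integral {1/4..1/2} \<psi>2
      + integral {1/2..3/4} \<psi>3)) {0..3/4}"
    by (rule has_integral_combine[OF _ _ h12 h3]) auto
  show ?thesis
    by (rule has_integral_combine[OF _ _ h123 h4]) auto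
qed

definition quarter_step :: "real \<Rightarrow> real \<Rightarrow> real \<Rightarrow> real \<Rightarrow> real \<Rightarrow> real" where
  "quarter_step c1 c2 c3 c4 t =
    (if t < 1/4 then c1 else if t < 1/2 then c2 else if t < 3/4 then c3 else c4)"

lemma quarter_step_mult:
  "quarter_step a1 a2 a3 a4 t * quarter_step b1 b2 b3 b4 t
    = quarter_step (a1 * b1) (a2 * b2) (a3 * b3) (a4 * b4) t"
  by (simp add: quarter_step_def)

lemma has_integral_quarter_step_mult:
  assumes "continuous_on {0..1} f"
  shows "((\<lambda>t. quarter_step c1 c2 c3 c4 t * f t) has_integral
    (c1 * integral {0..1/4} f + c2 * integral {1/4..1/2} f
      + c3 * integral {1/2..3/4} f + c4 * integral {3/4..1} f)) {0..1}"
  using has_integral_quarters[of "\<lambda>t. c1 * f t" "\<lambda>t. c2 * f t" "\<lambda>t. c3 * f t" "\<lambda>t. c4 * f t"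
      "\<lambda>t. quarter_step c1 c2 c3 c4 t * f t"] assms
  by (simp add: quarter_step_def continuous_on_mult_left)

lemma integrable_square_quarter_step_diff:
  assumes "continuous_on {0..1} s"
  shows "(\<lambda>t. (quarter_step c1 c2 c3 c4 t - s t)\<^sup>2) integrable_on {0..1}"
  by (rule has_integral_integrable, rule has_integral_quarters[of "\<lambda>t. (c1 - s t)\<^sup>2"
      "\<lambda>t. (c2 - s t)\<^sup>2" "\<lambda>t. (c3 - s t)\<^sup>2" "\<lambda>t. (c4 - s t)\<^sup>2"])
    (use assms in \<open>auto simp: quarter_step_def intro!: continuous_intros\<close>)

lemma g_test_eq_quarter_step: "g_test = quarter_step 1 0 0 (-1)"
  by (simp add: fun_eq_iff g_test_def quarter_step_def)

definition rademacher2 :: "real \<Rightarrow> real" where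
  "rademacher2 = quarter_step 1 (-1) 1 (-1)"

lemma integral_g_test_mult_reflection_class:
  assumes "reflection_class 1 f"
  shows "integral {0..1} (\<lambda>t. f t * g_test t) = 0"
proof -
  have "continuous_on {0..1} f"
    using assms by (simp add: reflection_class_def)
  from has_integral_quarter_step_mult[OF this, of 1 0 0 "-1"]
  show ?thesis
    using reflection_class_quarter_integrals(1)[OF assms]
    by (simp add: g_test_eq_quarter_step mult.commute integral_unique)
qed

lemma has_integral_rademacher2_mult_reflection_class:
  assumes "reflection_class \<sigma> f" "\<sigma>\<^sup>2 = 1"
  shows "((\<lambda>t. rademacher2 t * f t) has_integral 0) {0..1}"
proof -
  have "continuous_on {0..1} f"
    using assms by (simp add: reflection_class_def)
  from has_integral_quarter_step_mult[OF this, of 1 "-1" 1 "-1"]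
  have "((\<lambda>t. rademacher2 t * f t) has_integral
      integral {0..1/4} f - integral {1/4..1/2} f + integral {1/2..3/4} f - integral {3/4..1} f) {0..1}"
    by (simp add: rademacher2_def)
  moreover have "integral {0..1/4} f - integral {1/4..1/2} f + integral {1/2..3/4} f
      - integral {3/4..1} f = (1 - \<sigma>\<^sup>2) * (integral {0..1/4} f - f (1/4) / 4)"
    unfolding reflection_class_quarter_integrals[OF assms(1)]
    by (simp add: field_simps power2_eq_square)
  ultimately show ?thesis
    using assms(2) by simp
qed

lemma continuous_on_pwm_half_sum:
  "continuous_on {0..1} (\<lambda>t. \<Sum>l\<le>N. a l * pwm (1/2) l t)"
  using reflection_class_pwm_half by (intro continuous_intros) (auto simp: reflection_class_def)

lemma has_integral_rademacher2_mult_pwm_half_sum: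
  "((\<lambda>t. rademacher2 t * (\<Sum>l\<le>N. a l * pwm (1/2) l t)) has_integral 0) {0..1}"
proof -
  have r2: "((\<lambda>t. rademacher2 t * pwm (1/2) l t) has_integral 0) {0..1}" for l
    by (rule has_integral_rademacher2_mult_reflection_class[of "if l = 0 \<or> odd l then 1 else -1"])
      (use reflection_class_pwm_half[of l] in auto)
  have "((\<lambda>t. a l * (rademacher2 t * pwm (1/2) l t)) has_integral 0) {0..1}" for l
    using has_integral_mult_right[OF r2, of "a l"] by simp
  then have "((\<lambda>t. \<Sum>l\<le>N. a l * (rademacher2 t * pwm (1/2) l t)) has_integral (\<Sum>l\<le>N. 0)) {0..1}"
    by (intro has_integral_sum) auto
  moreover have "rademacher2 t * (\<Sum>l\<le>N. a l * pwm (1/2) l t)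
      = (\<Sum>l\<le>N. a l * (rademacher2 t * pwm (1/2) l t))" for t
    by (simp add: sum_distrib_left ac_simps)
  ultimately show ?thesis
    by simp
qed

text \<open>Cauchy-Schwarz against a function of modulus one, via \<open>0 \<le> (u - A w)\<^sup>2\<close>.\<close>
lemma L2norm01_ge_inner_unimodular:
  assumes "(\<lambda>t. (u t)\<^sup>2) integrable_on {0..1}" "((\<lambda>t. w t * u t) has_integral A) {0..1}"
    and "\<And>t. (w t)\<^sup>2 = 1"
  shows "A \<le> L2norm01 u"
proof -
  have pointwise: "2 * A * (w t * u t) - A\<^sup>2 \<le> (u t)\<^sup>2" for t
  proof -
    have "0 \<le> (u t - A * w t)\<^sup>2" by simp
    also have "\<dots> = (u t)\<^sup>2 - 2 * A * (w t * u t) + A\<^sup>2 * (w t)\<^sup>2"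
      by (simp add: power2_eq_square algebra_simps)
    finally show ?thesis using assms(3)[of t] by simp
  qed
  have "((\<lambda>t. 2 * A * (w t * u t) - A\<^sup>2) has_integral A\<^sup>2) {0..1}"
    using has_integral_diff[OF has_integral_mult_right[OF assms(2), of "2 * A"]
        has_integral_const_real[of "A\<^sup>2" 0 1]]
    by (simp add: power2_eq_square)
  then have "A\<^sup>2 \<le> integral {0..1} (\<lambda>t. (u t)\<^sup>2)"
    using has_integral_le[OF _ integrable_integral[OF assms(1)]] pointwise by blast
  then show ?thesis
    unfolding L2norm01_def by (rule real_le_rsqrt)
qed

lemma L2norm01_quarter_step_diff_pwm_half_sum_ge:
  "(c1 - c2 + c3 - c4) / 4
    \<le> L2norm01 (\<lambda>t. quarter_step c1 c2 c3 c4 t - (\<Sum>l\<le>N. a l * pwm (1/2) l t))"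
proof (rule L2norm01_ge_inner_unimodular)
  show "(\<lambda>t. (quarter_step c1 c2 c3 c4 t - (\<Sum>l\<le>N. a l * pwm (1/2) l t))\<^sup>2) integrable_on {0..1}"
    by (intro integrable_square_quarter_step_diff continuous_on_pwm_half_sum)
  have "((\<lambda>t. rademacher2 t * quarter_step c1 c2 c3 c4 t) has_integral (c1 - c2 + c3 - c4) / 4) {0..1}"
    using has_integral_quarter_step_mult[of "\<lambda>t. 1" c1 "-c2" c3 "-c4"]
    by (simp add: rademacher2_def quarter_step_mult add_divide_distrib diff_divide_distrib)
  from has_integral_diff[OF this has_integral_rademacher2_mult_pwm_half_sum]
  show "((\<lambda>t. rademacher2 t * (quarter_step c1 c2 c3 c4 t - (\<Sum>l\<le>N. a l * pwm (1/2) l t)))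
      has_integral (c1 - c2 + c3 - c4) / 4) {0..1}"
    by (simp add: right_diff_distrib)
  show "(rademacher2 t)\<^sup>2 = 1" for t
    by (simp add: rademacher2_def quarter_step_def)
qed

lemma L2norm01_g_test_diff_pwm_half_sum_ge:
  "1/2 \<le> L2norm01 (\<lambda>t. g_test t - (\<Sum>l\<le>N. a l * pwm (1/2) l t))"
  using L2norm01_quarter_step_diff_pwm_half_sum_ge[of 1 0 0 "-1" a N]
  by (simp add: g_test_eq_quarter_step)

lemma L2norm01_rademacher2_diff_pwm_half_sum_ge:
  "1 \<le> L2norm01 (\<lambda>t. rademacher2 t - (\<Sum>l\<le>N. a l * pwm (1/2) l t))"
  using L2norm01_quarter_step_diff_pwm_half_sum_ge[of 1 "-1" 1 "-1" a N]
  by (simp add: rademacher2_def)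

lemma rademacher2_square_integrable:
  "rademacher2 integrable_on {0..1}" "(\<lambda>t. (rademacher2 t)\<^sup>2) integrable_on {0..1}"
  using has_integral_quarter_step_mult[of "\<lambda>t. 1" 1 "-1" 1 "-1"]
    integrable_square_quarter_step_diff[of "\<lambda>t. 0" 1 "-1" 1 "-1"]
  by (auto simp: rademacher2_def)

theorem mainTheorem5:
  shows "(\<forall>k. (k = 0 \<or> odd k) \<longrightarrow>
            integral {0..1} (\<lambda>t. pwm (1/2) k t * g_test t) = 0)
       \<and> (\<exists>c>0. \<forall>(Np::nat) (gh::real \<Rightarrow> real).
            ((\<exists>a::nat \<Rightarrow> real. gh = (\<lambda>t. \<Sum>l\<le>Np. a l * pwm (1/2) l t))
             \<and> (\<forall>l\<le>Np. ip01 (\<lambda>t. g_test t - gh t) (pwm (1/2) l) = 0))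
            \<longrightarrow> L2norm01 (\<lambda>t. g_test t - gh t) \<ge> c)
       \<and> \<not> (\<forall>f::real \<Rightarrow> real. f integrable_on {0..1} \<and> (\<lambda>t. (f t)\<^sup>2) integrable_on {0..1}
              \<longrightarrow> (\<forall>\<epsilon>>0. \<exists>(N::nat) (a::nat \<Rightarrow> real).
                     L2norm01 (\<lambda>t. f t - (\<Sum>l\<le>N. a l * pwm (1/2) l t)) < \<epsilon>))"
proof (intro conjI)
  show "\<forall>k. (k = 0 \<or> odd k) \<longrightarrow> integral {0..1} (\<lambda>t. pwm (1/2) k t * g_test t) = 0"
  proof (intro allI impI)
    fix k :: nat assume "k = 0 \<or> odd k"
    then show "integral {0..1} (\<lambda>t. pwm (1/2) k t * g_test t) = 0"
      using reflection_class_pwm_half[of k] by (intro integral_g_test_mult_reflection_class) simp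
  qed
  show "\<exists>c>0. \<forall>(Np::nat) (gh::real \<Rightarrow> real).
            ((\<exists>a::nat \<Rightarrow> real. gh = (\<lambda>t. \<Sum>l\<le>Np. a l * pwm (1/2) l t))
             \<and> (\<forall>l\<le>Np. ip01 (\<lambda>t. g_test t - gh t) (pwm (1/2) l) = 0))
            \<longrightarrow> L2norm01 (\<lambda>t. g_test t - gh t) \<ge> c"
    using L2norm01_g_test_diff_pwm_half_sum_ge by (intro exI[of _ "1/2"]) auto
  show "\<not> (\<forall>f::real \<Rightarrow> real. f integrable_on {0..1} \<and> (\<lambda>t. (f t)\<^sup>2) integrable_on {0..1}
              \<longrightarrow> (\<forall>\<epsilon>>0. \<exists>(N::nat) (a::nat \<Rightarrow> real).
                     L2norm01 (\<lambda>t. f t - (\<Sum>l\<le>N. a l * pwm (1/2) l t)) < \<epsilon>))"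
    using rademacher2_square_integrable L2norm01_rademacher2_diff_pwm_half_sum_ge
    by (meson not_le zero_less_one)
qed

end
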